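(* Assume (A4) holds, and let $R^*:=\sup_{n\ge1}\sup\{|\boldsymbol\theta|_\infty:\boldsymbol\theta\in\operatorname{argmin}^*\widehat{\mathcal R}_{\ell,n}\}$. Then for all $n\ge1$ and $\lambda>0$ the set of minimizers of $\widehat{\mathcal R}_{\ell,\lambda}$ over $\mathcal P_{\mathbf a,\infty}$ is nonempty, and \[\sup_{\lambda\ge0,\,n\ge1}\Big\{|\boldsymbol\theta|_\infty:\boldsymbol\theta\in\operatorname{argmin}^*\widehat{\mathcal R}_{\ell,\lambda}\Big\}\le R^*\cdot P(\mathbf a)^{1/p}.\]
   Context: Setting: $d\in\mathbb N$, $\mathcal X=[0,1]^d$, $\mathcal Y=\{-1,1\}$; $\rho$ is a probability distribution on $\mathcal X\times\mathcal Y$, $(X,Y)\sim\rho$, $(x_i,y_i)_{i\ge1}$ i.i.d. from $\rho$. Networks: $\sigma(t)=\max\{0,t\}$; architecture $\mathbf a=(a_0,\dots,a_L)$ with $a_0=d$, $a_L=1$, $P(\mathbf a)=\sum_{l=1}^L(a_la_{l-1}+a_l)$; parametrization $\boldsymbol\theta=((W_l,B_l))_{l=1}^L$, $W_l\in\mathbb R^{a_l\times a_{l-1}}$, $B_l\in\mathbb R^{a_l}$, viewed as a vector in $\mathbb R^{P(\mathbf a)}$ with norms $|\cdot|_\infty$ (max absolute entry) and $|\boldsymbol\theta|_p^p=$ sum of $p$-th powers of absolute entries; $\mathcal P_{\mathbf a,\infty}$ is the set of all parametrizations. Realization $f(x;\boldsymbol\theta)=\operatorname{clip}_1(T_L\circ\sigma\circ\cdots\circ\sigma\circ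 T_1(x))$, $T_l(z)=W_lz+B_l$, $\operatorname{clip}_1(t)=\max(-1,\min(1,t))$. Fix $0<p<\infty$. $\widehat{\mathcal R}_{\ell,\lambda}(\boldsymbol\theta)=\frac1n\sum_{i=1}^n(f(x_i;\boldsymbol\theta)-y_i)^2+\frac\lambda2|\boldsymbol\theta|_p^p$, $\widehat{\mathcal R}_{\ell,n}=\widehat{\mathcal R}_{\ell,0}$; $\mathcal R_\ell(\boldsymbol\theta)=\mathbb E[(f(X;\boldsymbol\theta)-Y)^2]$. For $\lambda\ge0$, $\operatorname{argmin}^*\widehat{\mathcal R}_{\ell,\lambda}$ is the set of minimizers of $|\boldsymbol\theta|_\infty$ among the minimizers of $\widehat{\mathcal R}_{\ell,\lambda}$ over $\mathcal P_{\mathbf a,\infty}$ (in particular $\operatorname{argmin}^*\widehat{\mathcal R}_{\ell,n}$ for $\lambda=0$). Assumption (A4): the argmins of $\mathcal R_\ell$ and $\widehat{\mathcal R}_{\ell,n}$ are nonempty, and almost surely over the i.i.d. draws, $\sup_{n\ge1}\sup\{|\boldsymbol\theta|_\infty:\boldsymbol\theta\in\operatorname{argmin}^*\widehat{\mathcal R}_{\ell,n}\}<\infty$. *)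

theory Defs
  imports "HOL-Probability.Probability"
begin

text \<open>Inputs x in [0,1]^d are encoded as functions nat => real vanishing outside {0..<d};
  labels are reals in {-1,1}. A sample point is a pair (x,y).\<close>

definition sample_space :: "nat \<Rightarrow> ((nat \<Rightarrow> real) \<times> real) set" where
  "sample_space d = {(x, y). (\<forall>i<d. 0 \<le> x i \<and> x i \<le> 1) \<and> (\<forall>i\<ge>d. x i = 0) \<and> y \<in> {-1, 1}}"

text \<open>Architecture a = (a_0,...,a_L) as a list of length L+1, L >= 1.\<close>

definition valid_arch :: "nat \<Rightarrow> nat list \<Rightarrow> bool" where
  "valid_arch d a \<longleftrightarrow> length a \<ge> 2 \<and> a ! 0 = d \<and> last a = 1 \<and> (\<forall>l<length a. 0 < a ! l)"

definition nparams :: "nat list \<Rightarrow> nat" where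
  "nparams a = (\<Sum>l<length a - 1. a ! (Suc l) * a ! l + a ! (Suc l))"

text \<open>A layer (W,B): W is the list of rows of the weight matrix, B the bias vector.\<close>

type_synonym layer = "real list list \<times> real list"
type_synonym param = "layer list"

definition is_param :: "nat list \<Rightarrow> param \<Rightarrow> bool" where
  "is_param a \<theta> \<longleftrightarrow> length \<theta> = length a - 1 \<and>
     (\<forall>l<length \<theta>. length (fst (\<theta> ! l)) = a ! Suc l \<and>
        (\<forall>row\<in>set (fst (\<theta> ! l)). length row = a ! l) \<and>
        length (snd (\<theta> ! l)) = a ! Suc l)"

definition Params :: "nat list \<Rightarrow> param set" where
  "Params a = {\<theta>. is_param a \<theta>}"

definition entries :: "param \<Rightarrow> real list" where
  "entries \<theta> = concat (map (\<lambda>(W, B). concat W @ B) \<theta>)"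

definition sup_norm :: "param \<Rightarrow> real" where
  "sup_norm \<theta> = Max (insert 0 (abs ` set (entries \<theta>)))"

definition pnorm_pow :: "real \<Rightarrow> param \<Rightarrow> real" where
  "pnorm_pow p \<theta> = sum_list (map (\<lambda>t. \<bar>t\<bar> powr p) (entries \<theta>))"

definition relu :: "real \<Rightarrow> real" where
  "relu t = max 0 t"

definition clip1 :: "real \<Rightarrow> real" where
  "clip1 t = max (-1) (min 1 t)"

definition affine :: "layer \<Rightarrow> real list \<Rightarrow> real list" where
  "affine l z = map2 (\<lambda>row b. sum_list (map2 (*) row z) + b) (fst l) (snd l)"

fun net_eval :: "param \<Rightarrow> real list \<Rightarrow> real list" where
  "net_eval [] z = z"
| "net_eval [l] z = affine l z"
| "net_eval (l # ls) z = net_eval ls (map relu (affine l z))"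

definition realization :: "nat \<Rightarrow> param \<Rightarrow> (nat \<Rightarrow> real) \<Rightarrow> real" where
  "realization d \<theta> x = clip1 (hd (net_eval \<theta> (map x [0..<d])))"

text \<open>Penalized empirical risk on the first n sample points S 1, ..., S n;
  lambda = 0 gives the plain empirical risk.\<close>

definition emp_risk :: "nat \<Rightarrow> real \<Rightarrow> (nat \<Rightarrow> (nat \<Rightarrow> real) \<times> real) \<Rightarrow> nat \<Rightarrow> real \<Rightarrow> param \<Rightarrow> real" where
  "emp_risk d p S n lam \<theta> =
     (1 / real n) * (\<Sum>i=1..n. (realization d \<theta> (fst (S i)) - snd (S i))\<^sup>2) + lam / 2 * pnorm_pow p \<theta>"

definition pop_risk :: "nat \<Rightarrow> ((nat \<Rightarrow> real) \<times> real) measure \<Rightarrow> param \<Rightarrow> real" where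
  "pop_risk d \<rho> \<theta> = (\<integral>z. (realization d \<theta> (fst z) - snd z)\<^sup>2 \<partial>\<rho>)"

definition argmin_on :: "'a set \<Rightarrow> ('a \<Rightarrow> real) \<Rightarrow> 'a set" where
  "argmin_on A g = {x \<in> A. \<forall>y\<in>A. g x \<le> g y}"

definition argmin_star :: "param set \<Rightarrow> (param \<Rightarrow> real) \<Rightarrow> param set" where
  "argmin_star A g = argmin_on (argmin_on A g) sup_norm"

definition Rstar :: "nat \<Rightarrow> nat list \<Rightarrow> real \<Rightarrow> (nat \<Rightarrow> (nat \<Rightarrow> real) \<times> real) \<Rightarrow> ereal" where
  "Rstar d a p S = Sup (ereal ` {sup_norm \<theta> | n \<theta>. n \<ge> 1 \<and> \<theta> \<in> argmin_star (Params a) (emp_risk d p S n 0)})"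

end

theory Submission
  imports Defs
begin

text \<open>Reading the entries of a parametrization as a finitely supported real sequence identifies
  Params a with \<real>^P(a); all risks are continuous in that sequence, so they attain their infima on
  the compact sup-norm balls. For \<lambda> > 0 the penalty makes the objective coercive, which gives
  minimizers. If \<theta> minimizes the penalized risk and \<theta>* is a sup-norm minimal minimizer of the
  plain risk, adding the two minimality inequalities gives |\<theta>|_p \<le> |\<theta>*|_p, hence
  |\<theta>|_\<infinity> \<le> |\<theta>|_p \<le> P(a)^(1/p) |\<theta>*|_\<infinity> \<le> P(a)^(1/p) R*.\<close>

section \<open>Parametrizations as real sequences\<close>

definition layer_of :: "nat \<Rightarrow> nat \<Rightarrow> (nat \<Rightarrow> real) \<Rightarrow> layer" where
  "layer_of m n f = (map (\<lambda>j. map (\<lambda>k. f (j*m+k)) [0..<m]) [0..<n], map (\<lambda>j. f (n*m+j)) [0..<n])"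

fun unflatten :: "nat list \<Rightarrow> (nat \<Rightarrow> real) \<Rightarrow> param" where
  "unflatten (m # n # rest) f = layer_of m n f # unflatten (n # rest) (\<lambda>i. f (i + (n*m+n)))"
| "unflatten _ f = []"

definition flatten :: "nat list \<Rightarrow> param \<Rightarrow> nat \<Rightarrow> real" where
  "flatten a \<theta> i = (if i < nparams a then entries \<theta> ! i else 0)"

lemma concat_map_rows: "concat (map (\<lambda>j. map (\<lambda>k. g (j*m+k)) [0..<m]) [0..<n]) = map g [0..<n*m]"
proof (induction n)
  case (Suc n)
  have "[0..<Suc n * m] = [0..<n*m] @ [n*m..<n*m+m]"
    using upt_add_eq_append[of 0 "n*m" m] by (simp add: add.commute)
  moreover have "map g [n*m..<n*m+m] = map (\<lambda>k. g (n*m+k)) [0..<m]"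
    by (rule nth_equalityI) auto
  ultimately show ?case using Suc by simp
qed simp

lemma nparams_Cons_Cons: "nparams (m # n # rest) = n*m + n + nparams (n # rest)"
proof -
  have "length (m # n # rest) - 1 = Suc (length rest)" by simp
  then show ?thesis unfolding nparams_def by (simp only: sum.lessThan_Suc_shift) simp
qed

lemma nparams_eq_0: "length a < 2 \<Longrightarrow> nparams a = 0"
  unfolding nparams_def by simp

lemma entries_Nil [simp]: "entries [] = []"
  unfolding entries_def by simp

lemma entries_Cons [simp]: "entries (l # ls) = concat (fst l) @ snd l @ entries ls"
  unfolding entries_def by (cases l) simp

lemma entries_unflatten: "entries (unflatten a f) = map f [0..<nparams a]"
proof (induction a f rule: unflatten.induct)
  case (1 m n rest f)
  define N where "N = nparams (n # rest)"
  have "[0..<n*m+n+N] = [0..<n*m+n] @ [n*m+n..<n*m+n+N]"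
    by (rule upt_add_eq_append) simp
  moreover have "[0..<n*m+n] = [0..<n*m] @ [n*m..<n*m+n]"
    by (rule upt_add_eq_append) simp
  moreover have "map f [n*m..<n*m+n] = map (\<lambda>j. f (n*m+j)) [0..<n]"
    by (rule nth_equalityI) auto
  moreover have "map f [n*m+n..<n*m+n+N] = map (\<lambda>i. f (i + (n*m+n))) [0..<N]"
    by (rule nth_equalityI) (auto simp: add.commute)
  ultimately show ?case
    using "1" by (simp add: layer_of_def concat_map_rows nparams_Cons_Cons N_def)
qed (auto simp: nparams_eq_0)

lemma is_param_Cons_Cons: "is_param (m # n # rest) (l # ls) \<longleftrightarrow>
   length (fst l) = n \<and> (\<forall>row\<in>set (fst l). length row = m) \<and> length (snd l) = n \<and>
   is_param (n # rest) ls"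
proof -
  have *: "(\<forall>i<Suc k. P i) \<longleftrightarrow> P 0 \<and> (\<forall>i<k. P (Suc i))" for k and P :: "nat \<Rightarrow> bool"
    using less_Suc_eq_0_disj by auto
  show ?thesis unfolding is_param_def
    by (simp only: length_Cons * nth_Cons_0 nth_Cons_Suc) auto
qed

lemma is_param_unflatten: "is_param a (unflatten a f)"
proof (induction a f rule: unflatten.induct)
  case (1 m n rest f)
  then show ?case by (simp add: is_param_Cons_Cons layer_of_def)
qed (auto simp: is_param_def)

lemma unflatten_in_Params: "unflatten a f \<in> Params a"
  by (simp add: Params_def is_param_unflatten)

lemma is_param_ConsE:
  assumes "is_param a (l # ls)"
  obtains m n rest where "a = m # n # rest"
proof -
  from assms have "length a = Suc (Suc (length ls))" unfolding is_param_def by auto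
  then show ?thesis using that by (metis length_Suc_conv)
qed

lemma length_concat_const: "\<forall>x\<in>set xs. length x = c \<Longrightarrow> length (concat xs) = length xs * c"
  by (induction xs) auto

lemma length_entries: "is_param a \<theta> \<Longrightarrow> length (entries \<theta>) = nparams a"
proof (induction \<theta> arbitrary: a)
  case Nil
  then show ?case by (simp add: is_param_def nparams_eq_0)
next
  case (Cons l ls)
  then obtain m n rest where a: "a = m # n # rest" by (auto elim: is_param_ConsE)
  with Cons.prems have "length (fst l) = n" and rows: "\<forall>row\<in>set (fst l). length row = m"
    and "length (snd l) = n" "is_param (n # rest) ls" by (auto simp: is_param_Cons_Cons)
  with Cons.IH length_concat_const[OF rows] show ?case
    by (simp add: a nparams_Cons_Cons)
qed

lemma entries_inj:
  "is_param a \<theta> \<Longrightarrow> is_param a \<theta>' \<Longrightarrow> entries \<theta> = entries \<theta>' \<Longrightarrow> \<theta> = \<theta>'"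
proof (induction \<theta> arbitrary: a \<theta>')
  case Nil
  then show ?case by (simp add: is_param_def)
next
  case (Cons l ls)
  then obtain m n rest where a: "a = m # n # rest" by (auto elim: is_param_ConsE)
  from Cons.prems obtain l' ls' where \<theta>': "\<theta>' = l' # ls'"
    unfolding a is_param_def by (cases \<theta>') auto
  obtain W B W' B' where l: "l = (W, B)" and l': "l' = (W', B')" by force
  from Cons.prems have P: "length W = n" "\<forall>row\<in>set W. length row = m" "length B = n"
    "is_param (n # rest) ls"
    and P': "length W' = n" "\<forall>row\<in>set W'. length row = m" "length B' = n"
    "is_param (n # rest) ls'" by (auto simp: is_param_Cons_Cons a l l' \<theta>')
  have "length (concat W) = length (concat W')"
    using length_concat_const[OF P(2)] length_concat_const[OF P'(2)] P(1) P'(1) by simp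
  moreover have "concat W @ B @ entries ls = concat W' @ B' @ entries ls'"
    using Cons.prems(3) by (simp add: \<theta>' l l')
  ultimately have W: "concat W = concat W'" and B: "B = B'" and E: "entries ls = entries ls'"
    using P(3) P'(3) by auto
  have "W = W'"
  proof (rule concat_eq_concat_iff[THEN iffD1, OF _ _ W])
    show "\<forall>(x, y)\<in>set (zip W W'). length x = length y"
      using P(2) P'(2) by (metis (mono_tags, lifting) case_prodI2 set_zip_leftD set_zip_rightD)
  qed (simp add: P(1) P'(1))
  moreover have "ls = ls'" using Cons.IH[OF P(4) P'(4) E] .
  ultimately show ?case by (simp add: \<theta>' l l' B)
qed

lemma unflatten_flatten: "\<theta> \<in> Params a \<Longrightarrow> unflatten a (flatten a \<theta>) = \<theta>"
proof -
  assume "\<theta> \<in> Params a"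
  then have \<theta>: "is_param a \<theta>" by (simp add: Params_def)
  have "entries (unflatten a (flatten a \<theta>)) = entries \<theta>"
    unfolding entries_unflatten
    by (rule nth_equalityI) (auto simp: length_entries[OF \<theta>] flatten_def)
  then show ?thesis using entries_inj[OF is_param_unflatten \<theta>] by simp
qed

section \<open>Continuity in the parameters\<close>

lemma sum_list_map2_upt:
  "length z = m \<Longrightarrow> sum_list (map2 (*) (map g [0..<m]) z) = (\<Sum>k<m. g k * z ! k)"
proof -
  assume "length z = m"
  then have "map2 (*) (map g [0..<m]) z = map (\<lambda>k. g k * z ! k) [0..<m]"
    by (intro nth_equalityI) auto
  then show ?thesis by (simp add: interv_sum_list_conv_sum_set_nat atLeast0LessThan)
qed

lemma length_affine_layer_of: "length (affine (layer_of m n f) z) = n"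
  by (simp add: affine_def layer_of_def)

lemma nth_affine_layer_of: "length z = m \<Longrightarrow> j < n \<Longrightarrow>
   affine (layer_of m n f) z ! j = (\<Sum>k<m. f (j*m+k) * z ! k) + f (n*m+j)"
  by (simp add: affine_def layer_of_def sum_list_map2_upt)

text \<open>Lists carry no topology, so continuity of a list-valued map is expressed through a fixed
  length and continuity of every coordinate.\<close>

definition continuous_list :: "('a::topological_space \<Rightarrow> real list) \<Rightarrow> nat \<Rightarrow> bool" where
  "continuous_list F m \<longleftrightarrow> (\<forall>x. length (F x) = m) \<and> (\<forall>j<m. continuous_on UNIV (\<lambda>x. F x ! j))"

lemma continuous_list_affine:
  assumes "continuous_list Z m" "\<And>i. continuous_on UNIV (\<lambda>x. g x i)"
  shows "continuous_list (\<lambda>x. affine (layer_of m n (g x)) (Z x)) n"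
  unfolding continuous_list_def
proof (intro conjI allI impI length_affine_layer_of)
  fix j assume "j < n"
  with assms(1) have eq: "(\<lambda>x. affine (layer_of m n (g x)) (Z x) ! j) =
      (\<lambda>x. (\<Sum>k<m. g x (j*m+k) * Z x ! k) + g x (n*m+j))"
    unfolding continuous_list_def by (auto simp: nth_affine_layer_of)
  show "continuous_on UNIV (\<lambda>x. affine (layer_of m n (g x)) (Z x) ! j)"
    unfolding eq using assms unfolding continuous_list_def by (auto intro!: continuous_intros)
qed

lemma continuous_list_relu: "continuous_list Z m \<Longrightarrow> continuous_list (\<lambda>x. map relu (Z x)) m"
  unfolding continuous_list_def relu_def by (auto intro!: continuous_intros)

lemma net_eval_unflatten_Cons_Cons: "rest \<noteq> [] \<Longrightarrow>
   net_eval (unflatten (m # n # rest) f) z =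
   net_eval (unflatten (n # rest) (\<lambda>i. f (i + (n*m+n)))) (map relu (affine (layer_of m n f) z))"
  by (cases rest) auto

lemma continuous_list_net_eval:
  assumes "2 \<le> length a" "continuous_list Z (hd a)" "\<And>i. continuous_on UNIV (\<lambda>x. g x i)"
  shows "continuous_list (\<lambda>x. net_eval (unflatten a (g x)) (Z x)) (last a)"
  using assms
proof (induction a arbitrary: Z g rule: induct_list012)
  case (3 m n rest)
  show ?case
  proof (cases "rest = []")
    case True
    then show ?thesis using continuous_list_affine[of Z m g n] "3.prems" by simp
  next
    case False
    have "continuous_list (\<lambda>x. map relu (affine (layer_of m n (g x)) (Z x))) n"
      using "3.prems" by (intro continuous_list_relu continuous_list_affine) simp_all
    then have "continuous_list (\<lambda>x. net_eval (unflatten (n # rest) (\<lambda>i. g x (i + (n*m+n))))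
        (map relu (affine (layer_of m n (g x)) (Z x)))) (last (n # rest))"
      using False "3.prems"(3) by (intro "3.IH"(2)) (simp_all add: Suc_le_eq)
    then show ?thesis unfolding net_eval_unflatten_Cons_Cons[OF False] by simp
  qed
qed simp_all

lemma continuous_on_realization:
  assumes "valid_arch d a"
  shows "continuous_on UNIV (\<lambda>f. realization d (unflatten a f) x)"
proof -
  from assms have a: "2 \<le> length a" "hd a = d" "last a = 1"
    unfolding valid_arch_def by (metis hd_conv_nth list.size(3) not_numeral_le_zero)+
  then have "continuous_list (\<lambda>f. map x [0..<d]) (hd a)"
    unfolding continuous_list_def by auto
  from continuous_list_net_eval[OF a(1) this, of "\<lambda>f. f"] a(3)
  have net: "continuous_list (\<lambda>f. net_eval (unflatten a f) (map x [0..<d])) 1" by simp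
  then have "hd (net_eval (unflatten a f) (map x [0..<d])) = net_eval (unflatten a f) (map x [0..<d]) ! 0"
    for f unfolding continuous_list_def by (metis hd_conv_nth list.size(3) zero_neq_one)
  with net show ?thesis
    unfolding realization_def continuous_list_def clip1_def by (auto intro!: continuous_intros)
qed

lemma pnorm_pow_unflatten: "pnorm_pow p (unflatten a f) = (\<Sum>i<nparams a. \<bar>f i\<bar> powr p)"
  by (simp add: pnorm_pow_def entries_unflatten interv_sum_list_conv_sum_set_nat
      atLeast0LessThan comp_def)

lemma sup_norm_unflatten: "sup_norm (unflatten a f) = Max (insert 0 ((\<lambda>i. \<bar>f i\<bar>) ` {..<nparams a}))"
  by (simp add: sup_norm_def entries_unflatten image_image atLeast0LessThan)

lemma continuous_on_Max_abs:
  "continuous_on UNIV (\<lambda>f::nat \<Rightarrow> real. Max (insert 0 ((\<lambda>i. \<bar>f i\<bar>) ` {..<N})))"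
proof (induction N)
  case (Suc N)
  have "insert 0 ((\<lambda>i. \<bar>f i\<bar>) ` {..<Suc N}) = insert \<bar>f N\<bar> (insert 0 ((\<lambda>i. \<bar>f i\<bar>) ` {..<N}))"
    for f :: "nat \<Rightarrow> real" by (auto simp: lessThan_Suc)
  then have "Max (insert 0 ((\<lambda>i. \<bar>f i\<bar>) ` {..<Suc N})) =
      max \<bar>f N\<bar> (Max (insert 0 ((\<lambda>i. \<bar>f i\<bar>) ` {..<N})))" for f :: "nat \<Rightarrow> real"
    by simp
  with Suc show ?case
    by (simp only:) (intro continuous_intros continuous_on_product_coordinates)
qed simp

lemma continuous_on_sup_norm_unflatten: "continuous_on UNIV (\<lambda>f. sup_norm (unflatten a f))"
  unfolding sup_norm_unflatten by (rule continuous_on_Max_abs)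

lemma continuous_on_emp_risk_unflatten:
  assumes "valid_arch d a" "0 < p"
  shows "continuous_on UNIV (\<lambda>f. emp_risk d p S n lam (unflatten a f))"
  unfolding emp_risk_def pnorm_pow_unflatten
  using continuous_on_realization[OF assms(1)] assms(2)
  by (intro continuous_intros continuous_on_powr') auto

section \<open>Sup-norm versus p-norm\<close>

lemma abs_le_sup_norm: "t \<in> set (entries \<theta>) \<Longrightarrow> \<bar>t\<bar> \<le> sup_norm \<theta>"
  unfolding sup_norm_def by (intro Max_ge) auto

lemma sup_norm_nonneg: "0 \<le> sup_norm \<theta>"
  unfolding sup_norm_def by (intro Max_ge) auto

lemma pnorm_pow_nonneg: "0 \<le> pnorm_pow p \<theta>"
  unfolding pnorm_pow_def by (rule sum_list_nonneg) auto

lemma sup_norm_powr_le_pnorm_pow: "sup_norm \<theta> powr p \<le> pnorm_pow p \<theta>"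
proof -
  have "sup_norm \<theta> \<in> insert 0 (abs ` set (entries \<theta>))"
    unfolding sup_norm_def by (rule Max_in) auto
  then show ?thesis
  proof
    assume "sup_norm \<theta> = 0"
    then show ?thesis using pnorm_pow_nonneg by simp
  next
    assume "sup_norm \<theta> \<in> abs ` set (entries \<theta>)"
    then obtain t where t: "t \<in> set (entries \<theta>)" "sup_norm \<theta> = \<bar>t\<bar>" by auto
    show ?thesis
      unfolding pnorm_pow_def t(2) by (rule member_le_sum_list) (use t(1) in auto)
  qed
qed

lemma pnorm_pow_le_sup_norm_powr:
  "0 \<le> p \<Longrightarrow> pnorm_pow p \<theta> \<le> real (length (entries \<theta>)) * sup_norm \<theta> powr p"
  unfolding pnorm_pow_def
  using sum_list_mono[of "entries \<theta>" "\<lambda>t. \<bar>t\<bar> powr p" "\<lambda>_. sup_norm \<theta> powr p"]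
  by (simp add: powr_mono2 abs_le_sup_norm sum_list_triv)

lemma sup_norm_le_if_pnorm_pow_le:
  assumes "0 < p" "\<theta>' \<in> Params a" "pnorm_pow p \<theta> \<le> pnorm_pow p \<theta>'"
  shows "sup_norm \<theta> \<le> real (nparams a) powr (1 / p) * sup_norm \<theta>'"
proof -
  have "sup_norm \<theta> powr p \<le> real (nparams a) * sup_norm \<theta>' powr p"
    using sup_norm_powr_le_pnorm_pow[of \<theta> p] assms pnorm_pow_le_sup_norm_powr[of p \<theta>']
      length_entries[of a \<theta>'] by (simp add: Params_def)
  also have "\<dots> = (real (nparams a) powr (1 / p) * sup_norm \<theta>') powr p"
    using assms(1) sup_norm_nonneg[of \<theta>'] by (simp add: powr_mult powr_powr)
  finally have le: "sup_norm \<theta> powr p \<le> (real (nparams a) powr (1 / p) * sup_norm \<theta>') powr p" .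
  have "sup_norm \<theta> = (sup_norm \<theta> powr p) powr (1 / p)"
    using assms(1) sup_norm_nonneg[of \<theta>] by (simp add: powr_powr)
  also have "\<dots> \<le> ((real (nparams a) powr (1 / p) * sup_norm \<theta>') powr p) powr (1 / p)"
    by (rule powr_mono2[OF _ _ le]) (use assms(1) in auto)
  also have "\<dots> = real (nparams a) powr (1 / p) * sup_norm \<theta>'"
    using assms(1) sup_norm_nonneg[of \<theta>'] by (simp add: powr_powr)
  finally show ?thesis .
qed

section \<open>Existence of minimizers\<close>

definition cube :: "nat \<Rightarrow> real \<Rightarrow> (nat \<Rightarrow> real) set" where
  "cube N R = Pi\<^sub>E UNIV (\<lambda>i. if i < N then {-R..R} else {0})"

lemma compact_cube: "compact (cube N R)"
proof -
  have "compactin (product_topology (\<lambda>_. euclidean) UNIV)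
      (Pi\<^sub>E UNIV (\<lambda>i::nat. if i < N then {-R..R::real} else {0}))"
    by (subst compactin_PiE) auto
  then show ?thesis by (simp add: euclidean_product_topology cube_def)
qed

lemma mem_cube: "f \<in> cube N R \<longleftrightarrow> (\<forall>i. (i < N \<longrightarrow> \<bar>f i\<bar> \<le> R) \<and> (N \<le> i \<longrightarrow> f i = 0))"
proof -
  have "f i \<in> (if i < N then {-R..R} else {0}) \<longleftrightarrow> (i < N \<longrightarrow> \<bar>f i\<bar> \<le> R) \<and> (N \<le> i \<longrightarrow> f i = 0)"
    for i by (cases "i < N") (auto simp: abs_le_iff)
  then show ?thesis unfolding cube_def PiE_UNIV_domain Pi_iff by blast
qed

lemma flatten_in_cube:
  assumes "\<theta> \<in> Params a" "sup_norm \<theta> \<le> R"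
  shows "flatten a \<theta> \<in> cube (nparams a) R"
proof -
  have "\<bar>entries \<theta> ! i\<bar> \<le> R" if "i < nparams a" for i
    using assms that length_entries[of a \<theta>] abs_le_sup_norm[of "entries \<theta> ! i" \<theta>]
    by (simp add: Params_def)
  then show ?thesis unfolding mem_cube flatten_def by auto
qed

lemma Params_ball_attains_inf:
  fixes H :: "param \<Rightarrow> real"
  assumes "continuous_on UNIV (\<lambda>f. H (unflatten a f))" "closed {f. P (unflatten a f)}"
    and "\<theta>0 \<in> Params a" "P \<theta>0" "sup_norm \<theta>0 \<le> R"
  obtains \<theta> where "\<theta> \<in> Params a" "P \<theta>"
    "\<And>\<theta>'. \<theta>' \<in> Params a \<Longrightarrow> P \<theta>' \<Longrightarrow> sup_norm \<theta>' \<le> R \<Longrightarrow> H \<theta> \<le> H \<theta>'"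
proof -
  define C where "C = cube (nparams a) R \<inter> {f. P (unflatten a f)}"
  have "compact C"
    unfolding C_def using assms(2) by (intro compact_Int_closed compact_cube)
  moreover have "flatten a \<theta>0 \<in> C"
    unfolding C_def using assms(3-5) by (simp add: flatten_in_cube unflatten_flatten)
  ultimately obtain f where f: "f \<in> C" "\<And>g. g \<in> C \<Longrightarrow> H (unflatten a f) \<le> H (unflatten a g)"
    using continuous_attains_inf[of C "\<lambda>f. H (unflatten a f)"]
      continuous_on_subset[OF assms(1)] by blast
  show ?thesis
  proof (rule that[of "unflatten a f"])
    show "unflatten a f \<in> Params a" by (rule unflatten_in_Params)
    show "P (unflatten a f)" using f(1) by (simp add: C_def)
    fix \<theta>' assume "\<theta>' \<in> Params a" "P \<theta>'" "sup_norm \<theta>' \<le> R"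
    then have "flatten a \<theta>' \<in> C" by (simp add: C_def flatten_in_cube unflatten_flatten)
    with f(2) \<open>\<theta>' \<in> Params a\<close> show "H (unflatten a f) \<le> H \<theta>'"
      by (metis unflatten_flatten)
  qed
qed

lemma argmin_on_Params_nonempty:
  assumes "continuous_on UNIV (\<lambda>f. G (unflatten a f))"
    and "\<theta>0 \<in> Params a" "sup_norm \<theta>0 \<le> R"
    and coercive: "\<And>\<theta>. \<theta> \<in> Params a \<Longrightarrow> R < sup_norm \<theta> \<Longrightarrow> G \<theta>0 < G \<theta>"
  shows "argmin_on (Params a) G \<noteq> {}"
proof -
  obtain \<theta> where \<theta>: "\<theta> \<in> Params a"
    and min: "\<And>\<theta>'. \<theta>' \<in> Params a \<Longrightarrow> sup_norm \<theta>' \<le> R \<Longrightarrow> G \<theta> \<le> G \<theta>'"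
    using Params_ball_attains_inf[of G a "\<lambda>_. True"] assms(1-3) by auto
  have "G \<theta> \<le> G \<theta>'" if "\<theta>' \<in> Params a" for \<theta>'
  proof (cases "sup_norm \<theta>' \<le> R")
    case False
    with that have "G \<theta>0 < G \<theta>'" by (simp add: coercive)
    with min[OF assms(2,3)] show ?thesis by simp
  qed (use min that in auto)
  with \<theta> show ?thesis unfolding argmin_on_def by blast
qed

lemma argmin_star_Params_nonempty:
  assumes cont: "continuous_on UNIV (\<lambda>f. G (unflatten a f))"
    and "argmin_on (Params a) G \<noteq> {}"
  shows "argmin_star (Params a) G \<noteq> {}"
proof -
  obtain \<theta>0 where \<theta>0: "\<theta>0 \<in> argmin_on (Params a) G" using assms(2) by blast
  have "closed {f. G (unflatten a f) = G \<theta>0}"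
    using cont by (intro closed_Collect_eq) auto
  then obtain \<theta> where \<theta>: "\<theta> \<in> Params a" "G \<theta> = G \<theta>0"
    and min: "\<And>\<theta>'. \<theta>' \<in> Params a \<Longrightarrow> G \<theta>' = G \<theta>0 \<Longrightarrow> sup_norm \<theta>' \<le> sup_norm \<theta>0 \<Longrightarrow>
                sup_norm \<theta> \<le> sup_norm \<theta>'"
    using Params_ball_attains_inf[of sup_norm a "\<lambda>\<theta>. G \<theta> = G \<theta>0" \<theta>0 "sup_norm \<theta>0"] \<theta>0
      continuous_on_sup_norm_unflatten by (auto simp: argmin_on_def)
  have "\<theta> \<in> argmin_on (Params a) G"
    using \<theta> \<theta>0 by (simp add: argmin_on_def)
  moreover have "sup_norm \<theta> \<le> sup_norm \<theta>'" if "\<theta>' \<in> argmin_on (Params a) G" for \<theta>'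
  proof -
    have "\<theta>' \<in> Params a" "G \<theta>' = G \<theta>0"
      using that \<theta>0 by (auto simp: argmin_on_def intro: order_antisym)
    moreover have "sup_norm \<theta> \<le> sup_norm \<theta>0"
      using \<theta>0 min by (auto simp: argmin_on_def)
    ultimately show ?thesis
      using min[of \<theta>'] by (cases "sup_norm \<theta>' \<le> sup_norm \<theta>0") auto
  qed
  ultimately have "\<theta> \<in> argmin_star (Params a) G"
    unfolding argmin_star_def argmin_on_def[of "argmin_on (Params a) G" sup_norm] by blast
  then show ?thesis by blast
qed

lemma argmin_on_emp_risk_nonempty:
  assumes "valid_arch d a" "0 < p" "0 < lam"
  shows "argmin_on (Params a) (emp_risk d p S n lam) \<noteq> {}"
proof -
  let ?G = "emp_risk d p S n lam"
  define \<theta>0 where "\<theta>0 = unflatten a (\<lambda>_. 0)"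
  define R where "R = (2 * \<bar>?G \<theta>0\<bar> / lam + 1) powr (1 / p)"
  have "0 \<le> R" by (simp add: R_def)
  have "sup_norm \<theta>0 = 0"
    by (simp add: \<theta>0_def sup_norm_unflatten image_constant_conv)
  moreover have "?G \<theta>0 < ?G \<theta>" if "R < sup_norm \<theta>" for \<theta>
  proof -
    have "R powr p = 2 * \<bar>?G \<theta>0\<bar> / lam + 1"
      unfolding R_def using assms(2,3) by (simp add: powr_powr)
    then have "?G \<theta>0 < lam / 2 * R powr p"
      using assms(3) by (simp add: field_simps)
    also have "\<dots> < lam / 2 * sup_norm \<theta> powr p"
      using that assms(2,3) \<open>0 \<le> R\<close> by (simp add: powr_less_mono2)
    also have "\<dots> \<le> lam / 2 * pnorm_pow p \<theta>"
      using assms(3) sup_norm_powr_le_pnorm_pow[of \<theta> p] by simp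
    also have "\<dots> \<le> ?G \<theta>"
      unfolding emp_risk_def by (simp add: sum_nonneg)
    finally show ?thesis .
  qed
  ultimately show ?thesis
    using argmin_on_Params_nonempty[OF continuous_on_emp_risk_unflatten[OF assms(1,2)]]
      unflatten_in_Params \<open>0 \<le> R\<close> unfolding \<theta>0_def by metis
qed

section \<open>Size of penalized minimizers\<close>

lemma emp_risk_eq_penalized:
  "emp_risk d p S n lam = (\<lambda>\<theta>. emp_risk d p S n 0 \<theta> + lam / 2 * pnorm_pow p \<theta>)"
  unfolding emp_risk_def by simp

lemma argmin_on_penalty_le:
  assumes "x \<in> argmin_on A (\<lambda>x. F x + c * Q x)" "y \<in> argmin_on A F" "0 < c"
  shows "Q x \<le> Q y"
proof -
  have "F x + c * Q x \<le> F y + c * Q y" and "F y \<le> F x"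
    using assms(1,2) unfolding argmin_on_def by auto
  then have "c * Q x \<le> c * Q y" by linarith
  with assms(3) show ?thesis by simp
qed

lemma one_le_nparams: "valid_arch d a \<Longrightarrow> 1 \<le> nparams a"
proof -
  assume "valid_arch d a"
  then have "2 \<le> length a" "0 < a ! 1" unfolding valid_arch_def by auto
  moreover from \<open>2 \<le> length a\<close> obtain m n rest where "a = m # n # rest"
    by (metis Suc_le_length_iff numeral_2_eq_2)
  ultimately show ?thesis by (simp add: nparams_Cons_Cons)
qed

lemma argmin_star_subset: "argmin_star A g \<subseteq> argmin_on A g"
  unfolding argmin_star_def argmin_on_def by blast

lemma sup_norm_le_if_argmin_star:
  "\<theta> \<in> argmin_star A g \<Longrightarrow> \<theta>' \<in> argmin_on A g \<Longrightarrow> sup_norm \<theta> \<le> sup_norm \<theta>'"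
  unfolding argmin_star_def argmin_on_def[of "argmin_on A g"] by blast

lemma sup_norm_argmin_star_emp_risk_le:
  assumes "0 < p" "1 \<le> nparams a" "0 \<le> lam"
    and \<theta>: "\<theta> \<in> argmin_star (Params a) (emp_risk d p S n lam)"
    and \<theta>': "\<theta>' \<in> argmin_star (Params a) (emp_risk d p S n 0)"
  shows "sup_norm \<theta> \<le> real (nparams a) powr (1 / p) * sup_norm \<theta>'"
proof (cases "lam = 0")
  case True
  then have "sup_norm \<theta> \<le> sup_norm \<theta>'"
    using \<theta> \<theta>' argmin_star_subset by (blast intro: sup_norm_le_if_argmin_star)
  also have "\<dots> \<le> real (nparams a) powr (1 / p) * sup_norm \<theta>'"
    using assms(1,2) sup_norm_nonneg[of \<theta>'] by (simp add: mult_le_cancel_right1 ge_one_powr_ge_zero)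
  finally show ?thesis .
next
  case False
  have "\<theta> \<in> argmin_on (Params a) (\<lambda>\<theta>. emp_risk d p S n 0 \<theta> + lam / 2 * pnorm_pow p \<theta>)"
    using \<theta> argmin_star_subset emp_risk_eq_penalized[of d p S n lam] by auto
  moreover have "\<theta>' \<in> argmin_on (Params a) (emp_risk d p S n 0)"
    using \<theta>' argmin_star_subset by blast
  ultimately have "pnorm_pow p \<theta> \<le> pnorm_pow p \<theta>'"
    using assms(3) False by (intro argmin_on_penalty_le[where c = "lam / 2"]) auto
  moreover have "\<theta>' \<in> Params a"
    using \<theta>' argmin_star_subset by (auto simp: argmin_on_def)
  ultimately show ?thesis using assms(1) by (intro sup_norm_le_if_pnorm_pow_le)
qed

lemma sup_norm_argmin_star_le_Rstar:
  assumes "valid_arch d a" "0 < p" "1 \<le> n" "0 \<le> lam"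
    and "argmin_on (Params a) (emp_risk d p S n 0) \<noteq> {}"
    and "\<theta> \<in> argmin_star (Params a) (emp_risk d p S n lam)"
  shows "ereal (sup_norm \<theta>) \<le> Rstar d a p S * ereal (real (nparams a) powr (1 / p))"
proof -
  obtain \<theta>' where \<theta>': "\<theta>' \<in> argmin_star (Params a) (emp_risk d p S n 0)"
    using argmin_star_Params_nonempty[OF continuous_on_emp_risk_unflatten[OF assms(1,2)] assms(5)]
    by blast
  have "ereal (sup_norm \<theta>) \<le> ereal (sup_norm \<theta>') * ereal (real (nparams a) powr (1 / p))"
    using sup_norm_argmin_star_emp_risk_le[OF assms(2) one_le_nparams[OF assms(1)] assms(4,6) \<theta>']
    by (simp add: mult.commute)
  also have "\<dots> \<le> Rstar d a p S * ereal (real (nparams a) powr (1 / p))"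
  proof (rule ereal_mult_right_mono)
    show "ereal (sup_norm \<theta>') \<le> Rstar d a p S"
      unfolding Rstar_def using \<theta>' assms(3) by (intro Sup_upper) blast
  qed simp
  finally show ?thesis .
qed

text \<open>The claim holds pathwise on the event of A4_emp.\<close>

theorem lemma2:
  fixes M :: "'w measure" and \<rho> :: "((nat \<Rightarrow> real) \<times> real) measure"
    and Z :: "nat \<Rightarrow> 'w \<Rightarrow> (nat \<Rightarrow> real) \<times> real"
    and d :: nat and a :: "nat list" and p :: real
  assumes "prob_space M" and "prob_space \<rho>" and "space \<rho> = sample_space d"
    and "d \<ge> 1" and "valid_arch d a" and "0 < p"
    and "prob_space.indep_vars M (\<lambda>_. \<rho>) Z {1..}"
    and "\<forall>i\<ge>1. distr M \<rho> (Z i) = \<rho>"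
    and A4_pop: "argmin_on (Params a) (pop_risk d \<rho>) \<noteq> {}"
    and A4_emp: "AE \<omega> in M. \<forall>n\<ge>1. argmin_on (Params a) (emp_risk d p (\<lambda>i. Z i \<omega>) n 0) \<noteq> {}"
    and A4_bdd: "AE \<omega> in M. Rstar d a p (\<lambda>i. Z i \<omega>) < \<infinity>"
  shows "AE \<omega> in M.
     (\<forall>n\<ge>1. \<forall>lam>0. argmin_on (Params a) (emp_risk d p (\<lambda>i. Z i \<omega>) n lam) \<noteq> {}) \<and>
     Sup (ereal ` {sup_norm \<theta> | lam n \<theta>. lam \<ge> 0 \<and> n \<ge> 1 \<and>
                    \<theta> \<in> argmin_star (Params a) (emp_risk d p (\<lambda>i. Z i \<omega>) n lam)})
       \<le> Rstar d a p (\<lambda>i. Z i \<omega>) * ereal (real (nparams a) powr (1 / p))"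
  using A4_emp argmin_on_emp_risk_nonempty[OF assms(5,6)]
    sup_norm_argmin_star_le_Rstar[OF assms(5,6)]
  by (auto elim!: eventually_mono intro!: Sup_least)

end
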